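(* Let $f_i$ and $f_j$ be IID cluster finite set densities on finite subsets of $\mathbb{R}^d$ with cardinality pmfs $p_i,p_j$ on $\{0,1,2,\ldots\}$ and single-object localisation densities $\rho_i,\rho_j$ on $\mathbb{R}^d$, and let $\omega\in[0,1]$. Let $z_\omega=\int_{\mathbb{R}^d}\rho_i^{(1-\omega)}(x)\rho_j^{\omega}(x)\,\mathrm{d}x$, $$N_\omega=\sum_{n'=0}^\infty p_i^{(1-\omega)}(n')\,p_j^{\omega}(n')\,z_\omega^{n'},\qquad p_\omega(n)=\frac{1}{N_\omega}p_i^{(1-\omega)}(n)\,p_j^{\omega}(n)\,z_\omega^{n}.$$ Then for any number of objects $n\ge1$ with $p_i(n)\neq0$ and $p_j(n)\neq0$, the fused cardinality satisfies $p_\omega(n)<\min\{p_i(n),p_j(n)\}$ if $z_\omega<\mathcal{I}_{\omega,n}$, where $$\mathcal{I}_{\omega,n}=\left(N_\omega\frac{\min\{p_i(n),p_j(n)\}}{p_i^{(1-\omega)}(n)\,p_j^{\omega}(n)}\right)^{1/n}.$$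
   Context: An IID cluster finite set density with cardinality pmf $p$ and (probability) density $\rho$ on $\mathbb{R}^d$ is $f(\{x_1,\ldots,x_n\})=p(n)\,n!\prod_{k=1}^n\rho(x_k)$. For two such densities, the cardinality distribution of the exponential mixture density $f_\omega\propto f_i^{1-\omega}f_j^{\omega}$ (normalised with respect to the set integral) is the pmf $p_\omega$ given in the claim. *)

theory Defs
  imports "HOL-Analysis.Analysis"
begin

text \<open>Real power of a nonnegative number with the convention that any number
  raised to the exponent 0 is 1 (so that f^0 = 1 also where f vanishes, as in the
  exponential mixture f_i^(1-w) f_j^w for w in {0,1}).\<close>
definition pw :: "real \<Rightarrow> real \<Rightarrow> real" where
  "pw x a = (if a = 0 then 1 else x powr a)"

definition card_pmf :: "(nat \<Rightarrow> real) \<Rightarrow> bool" where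
  "card_pmf p \<longleftrightarrow> (\<forall>n. 0 \<le> p n) \<and> p sums 1"

definition prob_density :: "(real^'d \<Rightarrow> real) \<Rightarrow> bool" where
  "prob_density \<rho> \<longleftrightarrow> (\<forall>x. 0 \<le> \<rho> x) \<and> integrable lborel \<rho> \<and> integral\<^sup>L lborel \<rho> = 1"

end

theory Submission
  imports Defs
begin

text \<open>The fused cardinality at n is a z^n / N with a = p_i(n)^(1-w) p_j(n)^w > 0, so
  the claim is the inequality z^n < N m / a for m = min (p_i n) (p_j n), obtained by
  raising z < I to the n-th power. Positivity of the normaliser N is not assumed: since
  z \<ge> 0, the hypothesis z < I forces the radicand N m / a, hence N, to be positive.\<close>

lemma pw_nonneg: "0 \<le> pw x a"
  by (simp add: pw_def)

lemma pw_pos: "0 < x \<Longrightarrow> 0 < pw x a"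
  by (simp add: pw_def)

lemma card_pmf_pos: "card_pmf p \<Longrightarrow> p n \<noteq> 0 \<Longrightarrow> 0 < p n"
  unfolding card_pmf_def by (metis less_eq_real_def)

lemma mult_power_div_less_of_less_root:
  fixes z a m N :: real
  assumes "0 < n" and "0 \<le> z" and "0 < a" and "0 < m"
    and "z < root n (N * m / a)"
  shows "a * z ^ n / N < m"
proof -
  have radicand: "0 < N * m / a"
  proof (rule ccontr)
    assume "\<not> 0 < N * m / a"
    then have "root n (N * m / a) \<le> 0"
      using \<open>0 < n\<close> by (simp add: real_root_le_0_iff)
    then show False
      using assms(2,5) by simp
  qed
  then have "0 < N"
    using \<open>0 < a\<close> \<open>0 < m\<close> by (simp add: zero_less_divide_iff zero_less_mult_iff)
  have "z ^ n < root n (N * m / a) ^ n"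
    using assms by (simp add: power_strict_mono)
  also have "\<dots> = N * m / a"
    using \<open>0 < n\<close> radicand by simp
  finally have "a * z ^ n < N * m"
    using \<open>0 < a\<close> by (simp add: field_simps)
  then show ?thesis
    using \<open>0 < N\<close> by (simp add: field_simps)
qed

theorem corollary2:
  fixes p_i p_j :: "nat \<Rightarrow> real"
    and rho_i rho_j :: "real^'d \<Rightarrow> real"
    and \<omega> :: real and n :: nat
  assumes "card_pmf p_i" and "card_pmf p_j"
    and "prob_density rho_i" and "prob_density rho_j"
    and "0 \<le> \<omega>" and "\<omega> \<le> 1"
    and "n \<ge> 1" and "p_i n \<noteq> 0" and "p_j n \<noteq> 0"
  defines "z \<equiv> (LINT x|lborel. pw (rho_i x) (1 - \<omega>) * pw (rho_j x) \<omega>)"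
  defines "N \<equiv> (\<Sum>n'. pw (p_i n') (1 - \<omega>) * pw (p_j n') \<omega> * z ^ n')"
  defines "p_\<omega> \<equiv> (\<lambda>m. pw (p_i m) (1 - \<omega>) * pw (p_j m) \<omega> * z ^ m / N)"
  defines "I \<equiv> root n (N * min (p_i n) (p_j n) / (pw (p_i n) (1 - \<omega>) * pw (p_j n) \<omega>))"
  assumes "z < I"
  shows "p_\<omega> n < min (p_i n) (p_j n)"
proof -
  have pi: "0 < p_i n" and pj: "0 < p_j n"
    using assms(1,2,8,9) by (simp_all add: card_pmf_pos)
  have "0 \<le> z"
    unfolding z_def by (simp add: pw_nonneg)
  moreover have "0 < pw (p_i n) (1 - \<omega>) * pw (p_j n) \<omega>"
    using pi pj by (simp add: pw_pos)
  moreover have "0 < min (p_i n) (p_j n)"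
    using pi pj by simp
  ultimately show ?thesis
    using mult_power_div_less_of_less_root[OF _ _ _ _ \<open>z < I\<close>[unfolded I_def]] \<open>n \<ge> 1\<close>
    unfolding p_\<omega>_def by simp
qed

end
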